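(* Let $q$ be an odd prime power with $q\neq 3,5$. Then $\mathrm{PSL}(2,q)\notin\mathfrak{Y}_n$.
   Context: $\mathfrak{Y}_n$ denotes the class of all groups $G$ such that $N_G(A)=A$ for every non-abelian subgroup $A\le G$. *)

theory Defs
  imports "HOL-Computational_Algebra.Primes" "HOL-Algebra.Group_Action"
begin

text \<open>2x2 matrices (a,b,c,d) = [[a,b],[c,d]] over a field.\<close>
type_synonym 'a mat2 = "'a \<times> 'a \<times> 'a \<times> 'a"

definition mat2_mult :: "'a::field mat2 \<Rightarrow> 'a mat2 \<Rightarrow> 'a mat2" where
  "mat2_mult X Y = (case X of (a,b,c,d) \<Rightarrow> case Y of (e,f,g,h) \<Rightarrow>
     (a*e + b*g, a*f + b*h, c*e + d*g, c*f + d*h))"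

definition SL2 :: "('a::field mat2) monoid" where
  "SL2 = \<lparr> carrier = {(a,b,c,d). a*d - b*c = 1},
          mult = mat2_mult,
          one = (1,0,0,1) \<rparr>"

definition SL2_centre :: "('a::field mat2) set" where
  "SL2_centre = {(1,0,0,1), (-1,0,0,-1)}"

definition PSL2 :: "('a::field mat2 set) monoid" where
  "PSL2 = SL2 Mod SL2_centre"

definition class_Yn :: "('g, 'b) monoid_scheme \<Rightarrow> bool" where
  "class_Yn G \<longleftrightarrow> (\<forall>A. subgroup A G \<and>
        \<not> (\<forall>x\<in>A. \<forall>y\<in>A. x \<otimes>\<^bsub>G\<^esub> y = y \<otimes>\<^bsub>G\<^esub> x)
        \<longrightarrow> normalizer G A = A)"

end

theory Submission
  imports Defs
begin

text \<open>
  We take the image of a subgroup \<open>X\<close> of \<open>SL(2,q)\<close> containing \<open>-I\<close>, together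
  with an element \<open>g \<notin> X\<close> normalising \<open>X\<close>. Write \<open>-1 = a\<^sup>2 + b\<^sup>2\<close>; then \<open>J = (a,b;b,-a)\<close> satisfies \<open>J\<^sup>2 = -I\<close>
  and inverts the rotations \<open>(u,-v;v,u)\<close>, \<open>u\<^sup>2 + v\<^sup>2 = 1\<close>.

  For \<open>q \<ge> 11\<close>, \<open>X\<close> consists of the squares of rotations and their products with \<open>J\<close>, and \<open>g\<close> is a
  rotation that is not a square; the image of \<open>X\<close> is non-abelian because some square rotation has
  both coordinates non-zero. For \<open>q = 7, 9\<close>, where \<open>2\<close> is a square, \<open>J\<close> and \<open>(0,1;-1,0)\<close> span a
  quaternion algebra inside the matrices, \<open>X\<close> is the binary tetrahedral group of Hurwitz units,
  and \<open>g = (1 + i)/\<surd>2\<close>.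
\<close>

section \<open>Groups outside \<open>\<Y>\<^sub>n\<close>\<close>

lemma (in group) not_class_Yn_by_normalizing_element:
  assumes A: "subgroup A G" and xy: "x \<in> A" "y \<in> A" "x \<otimes> y \<noteq> y \<otimes> x"
    and g: "g \<in> carrier G" "g \<notin> A" and conj: "(\<lambda>a. g \<otimes> a \<otimes> inv g) ` A = A"
  shows "\<not> class_Yn G"
proof -
  have "g <# A #> inv g = (\<lambda>a. g \<otimes> a \<otimes> inv g) ` A"
    unfolding l_coset_def r_coset_def by blast
  then have "g \<in> normalizer G A"
    using g(1) conj subgroup.subset[OF A] unfolding normalizer_def stabilizer_def by simp
  with A xy g(2) show ?thesis unfolding class_Yn_def by blast
qed

lemma (in normal) not_class_Yn_Mod:
  assumes X: "subgroup X G" and NX: "H \<subseteq> X"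
    and uv: "u \<in> X" "v \<in> X" "H #> (u \<otimes> v) \<noteq> H #> (v \<otimes> u)"
    and g: "g \<in> carrier G" "g \<notin> X" and conj: "(\<lambda>x. g \<otimes> x \<otimes> inv g) ` X = X"
  shows "\<not> class_Yn (G Mod H)"
proof -
  interpret Q: group "G Mod H" by (rule factorgroup_is_group)
  interpret h: group_hom G "G Mod H" "\<lambda>a. H #> a"
    using r_coset_hom_Mod by unfold_locales
  have Xc: "X \<subseteq> carrier G" using X subgroup.subset by blast
  let ?A = "(\<lambda>a. H #> a) ` X"
  have gA: "H #> g \<notin> ?A"
  proof
    assume "H #> g \<in> ?A"
    then obtain x where "x \<in> X" "H #> g = H #> x" by blast
    then obtain n where "n \<in> H" "g = n \<otimes> x"
      using rcos_self[OF g(1) subgroup_axioms] unfolding r_coset_def by auto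
    with \<open>x \<in> X\<close> NX X g(2) show False by (auto intro: subgroup.m_closed)
  qed
  have "(\<lambda>A. (H #> g) \<otimes>\<^bsub>G Mod H\<^esub> A \<otimes>\<^bsub>G Mod H\<^esub> inv\<^bsub>G Mod H\<^esub> (H #> g)) ` ?A
      = (\<lambda>a. H #> a) ` ((\<lambda>x. g \<otimes> x \<otimes> inv g) ` X)"
    using g(1) Xc by (auto simp: image_comp h.hom_mult subset_iff intro!: image_cong)
  then have conjA: "(\<lambda>A. (H #> g) \<otimes>\<^bsub>G Mod H\<^esub> A \<otimes>\<^bsub>G Mod H\<^esub> inv\<^bsub>G Mod H\<^esub> (H #> g)) ` ?A = ?A"
    by (simp only: conj)
  have "(H #> u) \<otimes>\<^bsub>G Mod H\<^esub> (H #> v) \<noteq> (H #> v) \<otimes>\<^bsub>G Mod H\<^esub> (H #> u)"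
    using uv Xc h.hom_mult[of u v] h.hom_mult[of v u] by (simp add: subset_iff)
  from Q.not_class_Yn_by_normalizing_element[OF h.subgroup_img_is_subgroup[OF X] _ _ this _ gA conjA]
  show ?thesis using uv g(1) by simp
qed

section \<open>\<open>SL(2)\<close> and \<open>PSL(2)\<close>\<close>

lemma mat2_mult_simp:
  "mat2_mult (a,b,c,d) (e,f,g,h) = (a*e + b*g, a*f + b*h, c*e + d*g, c*f + d*h)"
  by (simp add: mat2_mult_def)

lemma mat2_mult_assoc: "mat2_mult (mat2_mult x y) z = mat2_mult x (mat2_mult y z)"
  by (simp add: mat2_mult_def algebra_simps split: prod.splits)

lemma mat2_mult_1_left: "mat2_mult (1,0,0,1) x = x"
  and mat2_mult_1_right: "mat2_mult x (1,0,0,1) = x"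
  by (simp_all add: mat2_mult_def split: prod.splits)

lemma SL2_carrier: "(a,b,c,d) \<in> carrier (SL2::'a::field mat2 monoid) \<longleftrightarrow> a*d - b*c = 1"
  by (simp add: SL2_def)

lemma SL2_mult: "x \<otimes>\<^bsub>(SL2::'a::field mat2 monoid)\<^esub> y = mat2_mult x y"
  by (simp add: SL2_def)

lemma SL2_one: "\<one>\<^bsub>(SL2::'a::field mat2 monoid)\<^esub> = (1,0,0,1)"
  by (simp add: SL2_def)

lemma SL2_group: "group (SL2::'a::field mat2 monoid)"
proof (rule groupI)
  fix x y :: "'a mat2"
  assume "x \<in> carrier SL2" "y \<in> carrier SL2"
  moreover obtain a b c d e f g h where "x = (a,b,c,d)" "y = (e,f,g,h)"
    by (cases x, cases y) blast
  moreover have "(a*e + b*g)*(c*f + d*h) - (a*f + b*h)*(c*e + d*g) = (a*d-b*c)*(e*h-f*g)"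
    by (simp add: algebra_simps)
  ultimately show "x \<otimes>\<^bsub>SL2\<^esub> y \<in> carrier SL2"
    by (simp add: SL2_def mat2_mult_simp)
next
  fix x :: "'a mat2"
  assume "x \<in> carrier SL2"
  then obtain a b c d where x: "x = (a,b,c,d)" "a*d - b*c = 1"
    by (cases x) (auto simp: SL2_def)
  show "\<exists>y\<in>carrier SL2. y \<otimes>\<^bsub>SL2\<^esub> x = \<one>\<^bsub>SL2\<^esub>"
    by (rule bexI[of _ "(d,-b,-c,a)"]) (use x in \<open>auto simp: SL2_def mat2_mult_simp algebra_simps\<close>)
qed (auto simp: SL2_def mat2_mult_def algebra_simps split: prod.splits)

lemma SL2_inv:
  assumes "a*d - b*c = (1::'a::field)"
  shows "inv\<^bsub>SL2\<^esub> (a,b,c,d) = (d,-b,-c,a)"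
  by (rule group.inv_equality[OF SL2_group]) (use assms in \<open>auto simp: SL2_def mat2_mult_simp algebra_simps\<close>)

definition mat2_uminus :: "'a::field mat2 \<Rightarrow> 'a mat2" where
  "mat2_uminus x = (case x of (a,b,c,d) \<Rightarrow> (-a,-b,-c,-d))"

lemma SL2_centre_rcos: "SL2_centre #>\<^bsub>SL2\<^esub> (x::'a::field mat2) = {x, mat2_uminus x}"
  by (cases x) (auto simp: r_coset_def SL2_centre_def SL2_def mat2_mult_simp mat2_uminus_def)

lemma SL2_subgroupI:
  assumes "X \<subseteq> carrier (SL2::'a::field mat2 monoid)" and "(1,0,0,1) \<in> X"
    and "\<And>x y. x \<in> X \<Longrightarrow> y \<in> X \<Longrightarrow> mat2_mult x y \<in> X"
    and "\<And>a b c d. (a,b,c,d) \<in> X \<Longrightarrow> (d,-b,-c,a) \<in> X"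
  shows "subgroup X SL2"
proof (rule group.subgroupI[OF SL2_group])
  fix x assume "x \<in> X"
  moreover obtain a b c d where "x = (a,b,c,d)" by (cases x)
  ultimately show "inv\<^bsub>SL2\<^esub> x \<in> X" using assms by (auto simp: SL2_inv SL2_carrier subset_iff)
qed (use assms in \<open>auto simp: SL2_mult\<close>)

lemma SL2_centre_normal: "SL2_centre \<lhd> (SL2::'a::field mat2 monoid)"
proof (rule group.normalI[OF SL2_group])
  show "subgroup SL2_centre (SL2::'a mat2 monoid)"
    by (rule SL2_subgroupI) (auto simp: SL2_centre_def SL2_def mat2_mult_simp)
  show "\<forall>x\<in>carrier SL2. SL2_centre #>\<^bsub>SL2\<^esub> x = x <#\<^bsub>SL2\<^esub> (SL2_centre::'a mat2 set)"
    by (auto simp: r_coset_def l_coset_def SL2_centre_def SL2_def mat2_mult_def split: prod.splits)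
qed

lemma not_class_Yn_PSL2:
  assumes X: "subgroup X (SL2::'a::field mat2 monoid)" and "(-1,0,0,-1) \<in> X"
    and uv: "u \<in> X" "v \<in> X" "mat2_mult u v \<noteq> mat2_mult v u"
      "mat2_mult u v \<noteq> mat2_uminus (mat2_mult v u)"
    and g: "g \<in> carrier SL2" "g \<notin> X"
    and conj: "(\<lambda>x. mat2_mult (mat2_mult g x) (inv\<^bsub>SL2\<^esub> g)) ` X = X"
  shows "\<not> class_Yn (PSL2::'a mat2 set monoid)"
  unfolding PSL2_def
proof (rule normal.not_class_Yn_Mod[OF SL2_centre_normal X _ uv(1,2) _ g])
  show "SL2_centre \<subseteq> X"
    using assms(2) subgroup.one_closed[OF X] by (auto simp: SL2_centre_def SL2_one)
  show "SL2_centre #>\<^bsub>SL2\<^esub> (u \<otimes>\<^bsub>SL2\<^esub> v) \<noteq> SL2_centre #>\<^bsub>SL2\<^esub> (v \<otimes>\<^bsub>SL2\<^esub> u)"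
    using uv(3,4) by (auto simp: SL2_centre_rcos SL2_mult doubleton_eq_iff)
qed (use conj in \<open>simp add: SL2_mult\<close>)

section \<open>Finite fields of odd order\<close>

lemma of_nat_card_UNIV_eq_0: "of_nat (card (UNIV::'a::{ring_1,finite} set)) = (0::'a)"
proof -
  have "bij_betw (\<lambda>y::'a. y + 1) UNIV UNIV"
    by (rule bij_betwI[of _ _ _ "\<lambda>y. y - 1"]) auto
  from sum.reindex_bij_betw[OF this, of "\<lambda>y. y"]
  have "(\<Sum>y\<in>UNIV. y + 1) = (\<Sum>y\<in>(UNIV::'a set). y)" by simp
  then show ?thesis by (simp add: sum.distrib)
qed

lemma two_neq_zero_if_odd_card:
  assumes "odd (card (UNIV::'a::{field,finite} set))"
  shows "(2::'a) \<noteq> 0"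
proof
  assume two: "(2::'a) = 0"
  obtain k where "card (UNIV::'a set) = 2*k + 1" using assms oddE by blast
  then have "(0::'a) = 1 + 2 * of_nat k" using of_nat_card_UNIV_eq_0[where 'a='a] by simp
  with two show False by simp
qed

lemma card_quadratic_roots_le_2: "card {t::'a::field. t*t + b*t + c = 0} \<le> 2"
proof (cases "\<exists>t0. t0*t0 + b*t0 + c = 0")
  case True
  then obtain t0 where t0: "t0*t0 + b*t0 + c = 0" by blast
  have "{t. t*t + b*t + c = 0} \<subseteq> {t0, -t0-b}"
  proof
    fix t assume "t \<in> {t. t*t + b*t + c = 0}"
    then have "(t - t0)*(t + t0 + b) = 0" using t0 by (simp add: algebra_simps) algebra
    moreover have "t + t0 + b = 0 \<Longrightarrow> t = -t0-b" by algebra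
    ultimately show "t \<in> {t0, -t0-b}" by auto
  qed
  then have "card {t. t*t + b*t + c = 0} \<le> card {t0, -t0-b}" by (rule card_mono[rotated]) simp
  also have "\<dots> \<le> 2" by (simp add: card_insert_if)
  finally show ?thesis .
qed simp

lemma card_square_roots_le_2: "card {t::'a::field. t*t = s} \<le> 2"
  using card_quadratic_roots_le_2[of 0 "-s"] by simp

text \<open>Squaring is at most two-to-one, so the squares and the elements \<open>-1 - s\<^sup>2\<close> form two sets of
  size at least \<open>q/2\<close>; as \<open>q\<close> is odd they cannot be disjoint.\<close>
lemma minus_one_sum_of_two_squares:
  assumes odd: "odd (card (UNIV::'a::{field,finite} set))"
  shows "\<exists>a b::'a. a*a + b*b = -1"
proof (rule ccontr)
  assume no: "\<not> ?thesis"
  define Q where "Q = range (\<lambda>a::'a. a*a)"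
  have "card (UNIV::'a set) = card (\<Union>s\<in>Q. {a. a*a = s})"
    unfolding Q_def by (rule arg_cong[where f=card]) auto
  also have "\<dots> \<le> (\<Sum>s\<in>Q. card {a::'a. a*a = s})" by (rule card_UN_le) simp
  also have "\<dots> \<le> (\<Sum>s\<in>Q. 2)" by (rule sum_mono) (rule card_square_roots_le_2)
  finally have le: "card (UNIV::'a set) \<le> 2 * card Q" by simp
  have "Q \<inter> (\<lambda>s. -1 - s) ` Q = {}"
    using no unfolding Q_def by (auto simp: algebra_simps)
  moreover have "card ((\<lambda>s::'a. -1 - s) ` Q) = card Q"
    by (rule card_image) (auto simp: inj_on_def)
  ultimately have "2 * card Q = card (Q \<union> (\<lambda>s. -1 - s) ` Q)"
    by (simp add: card_Un_disjoint)
  also have "\<dots> \<le> card (UNIV::'a set)" by (rule card_mono) auto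
  finally have "card (UNIV::'a set) = 2 * card Q" using le by simp
  with odd show False by simp
qed

lemma power_card_UNIV_minus_1_eq_1:
  assumes "(x::'a::{field,finite}) \<noteq> 0"
  shows "x ^ (card (UNIV::'a set) - 1) = 1"
proof -
  define U where "U = (UNIV::'a set) - {0}"
  have "bij_betw (\<lambda>y. x*y) U U"
    by (rule bij_betwI[of _ _ _ "\<lambda>y. y / x"]) (use assms in \<open>auto simp: U_def\<close>)
  from prod.reindex_bij_betw[OF this, of "\<lambda>y. y"]
  have "x ^ card U * (\<Prod>y\<in>U. y) = (\<Prod>y\<in>U. y)" by (simp add: prod.distrib)
  moreover have "(\<Prod>y\<in>U. y) \<noteq> 0" by (simp add: U_def)
  moreover have "card U = card (UNIV::'a set) - 1" by (simp add: U_def card_Diff_singleton)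
  ultimately show ?thesis by simp
qed

lemma square_eq_1_iff: "(z::'a::field)*z = 1 \<longleftrightarrow> z = 1 \<or> z = -1"
proof -
  have "z*z - 1 = (z - 1)*(z + 1)" by algebra
  then show ?thesis by (auto simp: eq_neg_iff_add_eq_0)
qed

lemma self_eq_uminus_iff: "(2::'a::field) \<noteq> 0 \<Longrightarrow> x = -x \<longleftrightarrow> (x::'a) = 0"
  by (simp add: eq_neg_iff_add_eq_0 flip: mult_2)

lemma four_neq_zero: "(2::'a::field) \<noteq> 0 \<Longrightarrow> (4::'a) \<noteq> 0"
  using mult_eq_0_iff[of "2::'a" 2] by simp

lemma minus_one_square_if_card_9:
  assumes "card (UNIV::'a::{field,finite} set) = 9"
  shows "\<exists>i::'a. i*i = -1"
proof (rule ccontr)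
  assume no: "\<not> ?thesis"
  have "x \<in> {0, 1, -1}" for x :: 'a
  proof (cases "x = 0")
    case False
    have "(x*x*x*x)*(x*x*x*x) = 1"
      using power_card_UNIV_minus_1_eq_1[OF False] assms by (simp add: numeral_eq_Suc algebra_simps)
    then have "x*x*x*x = 1 \<or> x*x*x*x = -1" by (simp only: square_eq_1_iff)
    moreover have "x*x*x*x \<noteq> -1" using no by (metis mult.assoc)
    ultimately have "(x*x)*(x*x) = 1" by (simp add: mult.assoc)
    then have "x*x = 1" using no by (auto simp: square_eq_1_iff)
    then show ?thesis by (simp add: square_eq_1_iff)
  qed simp
  then have "card (UNIV::'a set) \<le> card {0, 1, -1::'a}" by (intro card_mono) auto
  also have "\<dots> \<le> 3" by (simp add: card_insert_if)
  finally show False using assms by simp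
qed

section \<open>Dicyclic subgroups\<close>

definition rot :: "'a::field \<Rightarrow> 'a \<Rightarrow> 'a mat2" where
  "rot u v = (u, -v, v, u)"

text \<open>\<open>jrot a b u v = J * rot u v\<close> for \<open>J = (a,b,b,-a)\<close>.\<close>
definition jrot :: "'a::field \<Rightarrow> 'a \<Rightarrow> 'a \<Rightarrow> 'a \<Rightarrow> 'a mat2" where
  "jrot a b u v = (a*u + b*v, b*u - a*v, b*u - a*v, -(a*u + b*v))"

definition is_rot_square :: "'a::field \<Rightarrow> 'a \<Rightarrow> bool" where
  "is_rot_square u v \<longleftrightarrow> (\<exists>x y. x*x + y*y = 1 \<and> u = x*x - y*y \<and> v = 2*x*y)"

lemma rot_mult: "mat2_mult (rot u v) (rot u' v') = rot (u*u' - v*v') (u*v' + v*u')"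
  by (simp add: rot_def mat2_mult_simp algebra_simps)

lemma rot_mult_jrot: "mat2_mult (rot u v) (jrot a b u' v') = jrot a b (u*u' + v*v') (u*v' - v*u')"
  by (simp add: rot_def jrot_def mat2_mult_simp algebra_simps)

lemma jrot_mult_rot: "mat2_mult (jrot a b u v) (rot u' v') = jrot a b (u*u' - v*v') (u*v' + v*u')"
  by (simp add: rot_def jrot_def mat2_mult_simp algebra_simps)

lemma jrot_mult_jrot:
  assumes "a*a + b*b = (-1::'a::field)"
  shows "mat2_mult (jrot a b u v) (jrot a b u' v') = rot (-(u*u' + v*v')) (-(u*v' - v*u'))"
proof -
  have "(a*u + b*v)*(a*u' + b*v') + (b*u - a*v)*(b*u' - a*v') = (a*a + b*b)*(u*u' + v*v')"
    "(a*u + b*v)*(b*u' - a*v') - (b*u - a*v)*(a*u' + b*v') = -(a*a + b*b)*(u*v' - v*u')"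
    by algebra+
  then show ?thesis using assms by (simp add: rot_def jrot_def mat2_mult_simp algebra_simps)
qed

lemma rot_in_SL2: "rot u v \<in> carrier (SL2::'a::field mat2 monoid) \<longleftrightarrow> u*u + v*v = 1"
  by (simp add: rot_def SL2_carrier)

lemma jrot_in_SL2:
  assumes "a*a + b*b = (-1::'a::field)"
  shows "jrot a b u v \<in> carrier (SL2::'a mat2 monoid) \<longleftrightarrow> u*u + v*v = 1"
proof -
  have "(a*u + b*v)*(-(a*u + b*v)) - (b*u - a*v)*(b*u - a*v) = u*u + v*v"
    using assms by algebra
  then show ?thesis by (simp only: jrot_def SL2_carrier)
qed

lemma jrot_inj:
  assumes "a*a + b*b = (-1::'a::field)" and "jrot a b u v = jrot a b u' v'"
  shows "u = u'" "v = v'"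
proof -
  have e: "a*u + b*v = a*u' + b*v'" "b*u - a*v = b*u' - a*v'" using assms(2) by (auto simp: jrot_def)
  have "u = -(a*(a*u + b*v) + b*(b*u - a*v))" using assms(1) by algebra
  also have "\<dots> = u'" unfolding e using assms(1) by algebra
  finally show "u = u'" .
  have "v = -(b*(a*u + b*v) - a*(b*u - a*v))" using assms(1) by algebra
  also have "\<dots> = v'" unfolding e using assms(1) by algebra
  finally show "v = v'" .
qed

lemma is_rot_squareI: "x*x + y*y = 1 \<Longrightarrow> is_rot_square (x*x - y*y) (2*x*y)"
  unfolding is_rot_square_def by blast

lemma is_rot_square_mult:
  assumes "is_rot_square u v" "is_rot_square u' v'"
  shows "is_rot_square (u*u' - v*v') (u*v' + v*u')"
proof -
  obtain x y x' y' where h: "x*x + y*y = 1" "u = x*x - y*y" "v = 2*x*y"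
    "x'*x' + y'*y' = 1" "u' = x'*x' - y'*y'" "v' = 2*x'*y'"
    using assms unfolding is_rot_square_def by blast
  have "(x*x' - y*y')*(x*x' - y*y') + (x*y' + y*x')*(x*y' + y*x') = (x*x + y*y)*(x'*x' + y'*y')"
    by algebra
  also have "\<dots> = 1" using h by simp
  finally have "is_rot_square ((x*x' - y*y')*(x*x' - y*y') - (x*y' + y*x')*(x*y' + y*x'))
      (2*(x*x' - y*y')*(x*y' + y*x'))"
    by (rule is_rot_squareI)
  moreover have "u*u' - v*v' = (x*x' - y*y')*(x*x' - y*y') - (x*y' + y*x')*(x*y' + y*x')"
    "u*v' + v*u' = 2*(x*x' - y*y')*(x*y' + y*x')"
    using h by algebra+
  ultimately show ?thesis by simp
qed

lemma
  assumes "is_rot_square u v"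
  shows is_rot_square_conj: "is_rot_square u (-v)"
    and is_rot_square_uminus: "is_rot_square (-u) (-v)"
proof -
  obtain x y where h: "x*x + y*y = 1" "u = x*x - y*y" "v = 2*x*y"
    using assms unfolding is_rot_square_def by blast
  have "is_rot_square (x*x - y*y) (-(2*x*y))"
    using is_rot_squareI[of x "-y"] h(1) by simp
  with h show "is_rot_square u (-v)" by simp
  have "is_rot_square (-(x*x - y*y)) (-(2*x*y))"
    using is_rot_squareI[of "-y" x] h(1) by (simp add: algebra_simps)
  with h show "is_rot_square (-u) (-v)" by simp
qed

lemma is_rot_square_1: "is_rot_square 1 0" and is_rot_square_minus_1: "is_rot_square (-1) 0"
  using is_rot_squareI[of 1 0] is_rot_squareI[of 0 1] by simp_all

lemma is_rot_square_norm: "is_rot_square u v \<Longrightarrow> u*u + v*v = 1"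
  unfolding is_rot_square_def
proof (elim exE conjE)
  fix x y :: 'a assume "x*x + y*y = 1" "u = x*x - y*y" "v = 2*x*y"
  moreover have "(x*x - y*y)*(x*x - y*y) + (2*x*y)*(2*x*y) = (x*x + y*y)*(x*x + y*y)" by algebra
  ultimately show ?thesis by simp
qed

text \<open>Squaring is not injective on the circle, since \<open>(1,0)\<close> and \<open>(-1,0)\<close> have the same square.\<close>
lemma exists_not_rot_square:
  assumes "(2::'a::{field,finite}) \<noteq> 0"
  shows "\<exists>c d::'a. c*c + d*d = 1 \<and> \<not> is_rot_square c d"
proof -
  define T where "T = {(x,y). x*x + y*y = (1::'a)}"
  define sq where "sq = (\<lambda>(x::'a, y::'a). (x*x - y*y, 2*x*y))"
  have "sq ` T \<subseteq> T"
    using is_rot_square_norm[OF is_rot_squareI] by (auto simp: T_def sq_def)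
  moreover have "(1::'a) \<noteq> -1" using assms by (metis add.right_inverse one_add_one)
  then have "\<not> inj_on sq T"
    using inj_onD[of sq T "(1,0)" "(-1,0)"] by (auto simp: T_def sq_def)
  then have "card (sq ` T) < card T"
    using card_image_le[of T sq] inj_on_iff_eq_card[of T sq] by (simp add: less_le)
  ultimately have "\<not> T \<subseteq> sq ` T" using card_mono[of "sq ` T" T] by auto
  then obtain c d where "(c,d) \<in> T" "(c,d) \<notin> sq ` T" by auto
  then show ?thesis
    unfolding T_def sq_def is_rot_square_def by (auto simp: image_iff)
qed

definition rot_square_dicyclic :: "'a::field \<Rightarrow> 'a \<Rightarrow> 'a mat2 set" where
  "rot_square_dicyclic a b =
     {rot u v |u v. is_rot_square u v} \<union> {jrot a b u v |u v. is_rot_square u v}"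

lemma rot_square_dicyclic_subgroup:
  assumes ab: "a*a + b*b = (-1::'a::field)"
  shows "subgroup (rot_square_dicyclic a b) SL2"
proof (rule SL2_subgroupI)
  show "rot_square_dicyclic a b \<subseteq> carrier SL2"
    using is_rot_square_norm by (auto simp: rot_square_dicyclic_def rot_in_SL2 jrot_in_SL2[OF ab])
  show "(1,0,0,1) \<in> rot_square_dicyclic a b"
    using is_rot_square_1 unfolding rot_square_dicyclic_def rot_def by force
next
  fix x y assume "x \<in> rot_square_dicyclic a b" "y \<in> rot_square_dicyclic a b"
  then obtain u v u' v' where sq: "is_rot_square u v" "is_rot_square u' v'"
    and xy: "x = rot u v \<or> x = jrot a b u v" "y = rot u' v' \<or> y = jrot a b u' v'"
    unfolding rot_square_dicyclic_def by blast
  have "is_rot_square (u*u' - v*v') (u*v' + v*u')"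
    "is_rot_square (u*u' + v*v') (u*v' - v*u')"
    "is_rot_square (-(u*u' + v*v')) (-(u*v' - v*u'))"
    using is_rot_square_mult[OF sq] is_rot_square_mult[OF is_rot_square_conj[OF sq(1)] sq(2)]
      is_rot_square_uminus[OF is_rot_square_mult[OF is_rot_square_conj[OF sq(1)] sq(2)]]
    by simp_all
  with xy show "mat2_mult x y \<in> rot_square_dicyclic a b"
    unfolding rot_square_dicyclic_def
    by (elim disjE) (simp_all only: rot_mult rot_mult_jrot jrot_mult_rot jrot_mult_jrot[OF ab], blast+)
next
  fix p q r s assume "(p,q,r,s) \<in> rot_square_dicyclic a b"
  then obtain u v where sq: "is_rot_square u v"
    and "(p,q,r,s) = rot u v \<or> (p,q,r,s) = jrot a b u v"
    unfolding rot_square_dicyclic_def by blast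
  then consider "(s,-q,-r,p) = rot u (-v)" | "(s,-q,-r,p) = jrot a b (-u) (-v)"
    by (auto simp: rot_def jrot_def)
  then show "(s,-q,-r,p) \<in> rot_square_dicyclic a b"
    using is_rot_square_conj[OF sq] is_rot_square_uminus[OF sq]
    unfolding rot_square_dicyclic_def by cases blast+
qed

lemma rot_mult_rot_inverse: "c*c + d*d = 1 \<Longrightarrow> mat2_mult (rot c d) (rot c (-d)) = (1,0,0,1)"
  by (simp add: rot_mult) (simp add: rot_def)

lemma rot_conj_rot_square_dicyclic_subset:
  assumes "c*c + d*d = (1::'a::field)"
  shows "(\<lambda>x. mat2_mult (mat2_mult (rot c d) x) (rot c (-d))) ` rot_square_dicyclic a b
    \<subseteq> rot_square_dicyclic a b"
proof (rule image_subsetI)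
  fix x assume "x \<in> rot_square_dicyclic a b"
  then obtain u v where sq: "is_rot_square u v" and x: "x = rot u v \<or> x = jrot a b u v"
    unfolding rot_square_dicyclic_def by blast
  have "mat2_mult (mat2_mult (rot c d) (rot u v)) (rot c (-d)) = rot u v"
    unfolding rot_mult by (rule arg_cong2[where f=rot]) (use assms in algebra)+
  moreover have "mat2_mult (mat2_mult (rot c d) (jrot a b u v)) (rot c (-d))
      = jrot a b (u*(c*c - d*d) - v*(-(2*c*d))) (u*(-(2*c*d)) + v*(c*c - d*d))"
    unfolding rot_mult_jrot jrot_mult_rot by (rule arg_cong2[where f="jrot a b"]) algebra+
  moreover have "is_rot_square (c*c - d*d) (-(2*c*d))"
    using is_rot_squareI[of c "-d"] assms by simp
  then have "is_rot_square (u*(c*c - d*d) - v*(-(2*c*d))) (u*(-(2*c*d)) + v*(c*c - d*d))"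
    by (rule is_rot_square_mult[OF sq])
  ultimately show "mat2_mult (mat2_mult (rot c d) x) (rot c (-d)) \<in> rot_square_dicyclic a b"
    using x sq unfolding rot_square_dicyclic_def by (elim disjE) blast+
qed

lemma rot_conj_rot_square_dicyclic:
  assumes "c*c + d*d = (1::'a::field)"
  shows "(\<lambda>x. mat2_mult (mat2_mult (rot c d) x) (rot c (-d))) ` rot_square_dicyclic a b
    = rot_square_dicyclic a b" (is "?f c d ` ?D = ?D")
proof
  show "?f c d ` ?D \<subseteq> ?D" by (rule rot_conj_rot_square_dicyclic_subset[OF assms])
next
  show "?D \<subseteq> ?f c d ` ?D"
  proof
    fix x assume "x \<in> ?D"
    then have "?f c (-d) x \<in> ?D" using rot_conj_rot_square_dicyclic_subset[of c "-d"] assms by auto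
    moreover have "x = ?f c d (?f c (-d) x)"
    proof -
      have "?f c d (?f c (-d) x)
          = mat2_mult (mat2_mult (mat2_mult (rot c d) (rot c (-d))) x) (mat2_mult (rot c d) (rot c (-d)))"
        by (simp only: mat2_mult_assoc minus_minus)
      then show ?thesis
        by (simp add: rot_mult_rot_inverse[OF assms] mat2_mult_1_left mat2_mult_1_right)
    qed
    ultimately show "x \<in> ?f c d ` ?D" by blast
  qed
qed

lemma rot_notin_rot_square_dicyclic:
  fixes c d :: "'a::field"
  assumes "(2::'a) \<noteq> 0" "c*c + d*d = 1" "\<not> is_rot_square c d"
  shows "rot c d \<notin> rot_square_dicyclic a b"
proof
  assume "rot c d \<in> rot_square_dicyclic a b"
  then consider "is_rot_square c d" | u v where "rot c d = jrot a b u v"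
    unfolding rot_square_dicyclic_def by (auto simp: rot_def)
  then show False
  proof cases
    case 2
    then have "c = -c" "d = -d" by (auto simp: rot_def jrot_def)
    with assms(1,2) show False by (simp add: self_eq_uminus_iff)
  qed (use assms(3) in blast)
qed

lemma mat2_uminus_jrot: "mat2_uminus (jrot a b u v) = jrot a b (-u) (-v)"
  by (simp add: mat2_uminus_def jrot_def algebra_simps)

lemma not_class_Yn_PSL2_if_rot_square:
  fixes a b u v :: "'a::{field,finite}"
  assumes two: "(2::'a) \<noteq> 0" and ab: "a*a + b*b = -1"
    and uv: "is_rot_square u v" "u \<noteq> 0" "v \<noteq> 0"
  shows "\<not> class_Yn (PSL2::'a mat2 set monoid)"
proof -
  obtain c d :: 'a where cd: "c*c + d*d = 1" "\<not> is_rot_square c d"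
    using exists_not_rot_square[OF two] by blast
  have "inv\<^bsub>SL2\<^esub> (rot c d) = rot c (-d)"
    using cd(1) SL2_inv[of c c "-d" d] by (simp add: rot_def)
  then have conj: "(\<lambda>x. mat2_mult (mat2_mult (rot c d) x) (inv\<^bsub>SL2\<^esub> (rot c d))) ` rot_square_dicyclic a b
      = rot_square_dicyclic a b"
    using rot_conj_rot_square_dicyclic[OF cd(1)] by simp
  have uv_mult: "mat2_mult (rot u v) (jrot a b 1 0) = jrot a b u (-v)"
    "mat2_mult (jrot a b 1 0) (rot u v) = jrot a b u v"
    by (simp_all add: rot_mult_jrot jrot_mult_rot)
  show ?thesis
  proof (rule not_class_Yn_PSL2[OF rot_square_dicyclic_subgroup[OF ab]])
    show "rot u v \<in> rot_square_dicyclic a b" "jrot a b 1 0 \<in> rot_square_dicyclic a b"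
      "(-1,0,0,-1) \<in> rot_square_dicyclic a b"
      using uv(1) is_rot_square_1 is_rot_square_minus_1
      unfolding rot_square_dicyclic_def rot_def by force+
    show "mat2_mult (rot u v) (jrot a b 1 0) \<noteq> mat2_mult (jrot a b 1 0) (rot u v)"
      "mat2_mult (rot u v) (jrot a b 1 0) \<noteq> mat2_uminus (mat2_mult (jrot a b 1 0) (rot u v))"
      using jrot_inj[OF ab] uv(2,3) two unfolding uv_mult mat2_uminus_jrot
      by (metis self_eq_uminus_iff)+
  qed (use cd rot_in_SL2 rot_notin_rot_square_dicyclic[OF two] conj in auto)
qed

text \<open>Parametrise the circle by \<open>t \<mapsto> ((1 - t\<^sup>2)/(1 + t\<^sup>2), 2t/(1 + t\<^sup>2))\<close>; at most nine values
  of \<open>t\<close> are excluded by the requirements.\<close>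
lemma exists_rot_square_nonzero:
  assumes two: "(2::'a::{field,finite}) \<noteq> 0" and big: "card (UNIV::'a set) \<ge> 10"
  shows "\<exists>u v::'a. is_rot_square u v \<and> u \<noteq> 0 \<and> v \<noteq> 0"
proof -
  define B where "B = {0::'a} \<union> {t. t*t + 0*t + 1 = 0} \<union> {t. t*t + 0*t + -1 = 0}
      \<union> {t. t*t + 2*t + -1 = 0} \<union> {t. t*t + -2*t + -1 = 0}"
  have "card B \<le> 1 + 2 + 2 + 2 + 2"
    unfolding B_def
    by (rule order_trans[OF card_Un_le] add_mono)+ (rule card_quadratic_roots_le_2 | simp)+
  with big have "B \<noteq> UNIV" by auto
  then obtain t where "t \<notin> B" by blast
  then have t: "t \<noteq> 0" "1 + t*t \<noteq> 0" "1 - t*t \<noteq> 0" "t*t + 2*t - 1 \<noteq> 0" "t*t - 2*t - 1 \<noteq> 0"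
    unfolding B_def by (auto simp: algebra_simps)
  define x y where "x = (1 - t*t)/(1 + t*t)" and "y = 2*t/(1 + t*t)"
  have "x*x + y*y = ((1 - t*t)*(1 - t*t) + (2*t)*(2*t))/((1 + t*t)*(1 + t*t))"
    unfolding x_def y_def by (simp add: add_divide_distrib)
  also have "(1 - t*t)*(1 - t*t) + (2*t)*(2*t) = (1 + t*t)*(1 + t*t)" by algebra
  finally have "is_rot_square (x*x - y*y) (2*x*y)" using t(2) by (simp add: is_rot_squareI)
  moreover have "2*x*y \<noteq> 0" unfolding x_def y_def using two t(1-3) by simp
  moreover have "x*x - y*y \<noteq> 0"
  proof -
    have "x*x - y*y = ((1 - t*t)*(1 - t*t) - (2*t)*(2*t))/((1 + t*t)*(1 + t*t))"
      unfolding x_def y_def times_divide_times_eq by (rule diff_divide_distrib[symmetric])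
    also have "(1 - t*t)*(1 - t*t) - (2*t)*(2*t) = (t*t + 2*t - 1)*(t*t - 2*t - 1)" by algebra
    finally show ?thesis using t by simp
  qed
  ultimately show ?thesis by blast
qed

section \<open>Quaternion subgroups\<close>

type_synonym 'a quat = "'a \<times> 'a \<times> 'a \<times> 'a"

definition qmul :: "'a::comm_ring quat \<Rightarrow> 'a quat \<Rightarrow> 'a quat" where
  "qmul p p' = (case p of (w,x,y,z) \<Rightarrow> case p' of (w',x',y',z') \<Rightarrow>
     (w*w' - x*x' - y*y' - z*z', w*x' + x*w' + y*z' - z*y',
      w*y' - x*z' + y*w' + z*x', w*z' + x*y' - y*x' + z*w'))"

definition qconj :: "'a::comm_ring quat \<Rightarrow> 'a quat" where
  "qconj p = (case p of (w,x,y,z) \<Rightarrow> (w, -x, -y, -z))"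

definition qnorm :: "'a::comm_ring quat \<Rightarrow> 'a" where
  "qnorm p = (case p of (w,x,y,z) \<Rightarrow> w*w + x*x + y*y + z*z)"

definition qscale :: "'a::comm_ring \<Rightarrow> 'a quat \<Rightarrow> 'a quat" where
  "qscale s p = (case p of (w,x,y,z) \<Rightarrow> (s*w, s*x, s*y, s*z))"

definition of_int_quat :: "int quat \<Rightarrow> 'a::comm_ring_1 quat" where
  "of_int_quat p = (case p of (w,x,y,z) \<Rightarrow> (of_int w, of_int x, of_int y, of_int z))"

lemma qmul_qscale: "qmul (qscale s p) (qscale t p') = qscale (s*t) (qmul p p')"
  by (cases p; cases p') (simp add: qmul_def qscale_def algebra_simps)

lemma qscale_qscale: "qscale s (qscale t p) = qscale (s*t) p"
  by (simp add: qscale_def algebra_simps split: prod.splits)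

lemma qnorm_qscale: "qnorm (qscale s p) = s*s * qnorm p"
  by (simp add: qnorm_def qscale_def algebra_simps split: prod.splits)

lemma qconj_qscale: "qconj (qscale s p) = qscale s (qconj p)"
  by (simp add: qconj_def qscale_def split: prod.splits)

lemma of_int_quat_qmul: "of_int_quat (qmul p p') = qmul (of_int_quat p) (of_int_quat p')"
  by (simp add: qmul_def of_int_quat_def split: prod.splits)

lemma of_int_quat_qscale: "of_int_quat (qscale s p) = qscale (of_int s) (of_int_quat p)"
  by (simp add: qscale_def of_int_quat_def split: prod.splits)

lemma of_int_quat_qconj: "of_int_quat (qconj p) = qconj (of_int_quat p)"
  by (simp add: qconj_def of_int_quat_def split: prod.splits)

lemma qnorm_of_int_quat: "qnorm (of_int_quat p) = of_int (qnorm p)"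
  by (simp add: qnorm_def of_int_quat_def split: prod.splits)

text \<open>If \<open>a\<^sup>2 + b\<^sup>2 = -1\<close>, then \<open>1, i, j, k\<close> are represented by \<open>I\<close>, \<open>(0,1,-1,0)\<close>, \<open>(a,b,b,-a)\<close>
  and \<open>(b,-a,-a,-b)\<close>.\<close>
definition quat_mat :: "'a::field \<Rightarrow> 'a \<Rightarrow> 'a quat \<Rightarrow> 'a mat2" where
  "quat_mat a b p = (case p of (w,x,y,z) \<Rightarrow>
     (w + y*a + z*b, x + y*b - z*a, -x + y*b - z*a, w - y*a - z*b))"

lemma quat_mat_qmul:
  assumes "a*a + b*b = (-1::'a::field)"
  shows "mat2_mult (quat_mat a b p) (quat_mat a b p') = quat_mat a b (qmul p p')"
proof -
  obtain w x y z w' x' y' z' where p: "p = (w,x,y,z)" "p' = (w',x',y',z')" by (cases p, cases p')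
  show ?thesis unfolding p
    by (simp add: quat_mat_def qmul_def mat2_mult_simp; intro conjI; insert assms; algebra)
qed

lemma quat_mat_in_SL2_iff:
  assumes "a*a + b*b = (-1::'a::field)"
  shows "quat_mat a b p \<in> carrier (SL2::'a mat2 monoid) \<longleftrightarrow> qnorm p = 1"
proof -
  obtain w x y z where p: "p = (w,x,y,z)" by (cases p)
  have "(w + y*a + z*b)*(w - y*a - z*b) - (x + y*b - z*a)*(-x + y*b - z*a) = w*w + x*x + y*y + z*z"
    using assms by algebra
  then show ?thesis by (simp add: p quat_mat_def qnorm_def SL2_carrier)
qed

lemma quat_mat_qconj: "quat_mat a b p = (m11,m12,m21,m22) \<Longrightarrow> quat_mat a b (qconj p) = (m22,-m12,-m21,m11)"
  by (cases p) (auto simp: quat_mat_def qconj_def algebra_simps)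

lemma mat2_uminus_quat_mat: "mat2_uminus (quat_mat a b p) = quat_mat a b (qscale (-1) p)"
  by (cases p) (simp add: quat_mat_def qscale_def mat2_uminus_def algebra_simps)

lemma quat_mat_inj:
  assumes ab: "a*a + b*b = (-1::'a::field)" and two: "(2::'a) \<noteq> 0"
    and eq: "quat_mat a b p = quat_mat a b p'"
  shows "p = p'"
proof -
  obtain w x y z w' x' y' z' where p: "p = (w,x,y,z)" "p' = (w',x',y',z')" by (cases p, cases p')
  have e: "w + y*a + z*b = w' + y'*a + z'*b" "x + y*b - z*a = x' + y'*b - z'*a"
     "-x + y*b - z*a = -x' + y'*b - z'*a" "w - y*a - z*b = w' - y'*a - z'*b"
    using eq by (simp_all add: p quat_mat_def)
  have "2*w = 2*w'" "2*x = 2*x'" "2*y = 2*y'" "2*z = 2*z'" using e ab by algebra+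
  with two show ?thesis by (simp add: p)
qed

lemma quat_mat_image_subgroup:
  fixes a b :: "'a::field" and T :: "'a quat set"
  assumes ab: "a*a + b*b = -1"
    and T: "\<And>x. x \<in> T \<Longrightarrow> qnorm x = 1" "(1,0,0,0) \<in> T"
      "\<And>x y. x \<in> T \<Longrightarrow> y \<in> T \<Longrightarrow> qmul x y \<in> T" "\<And>x. x \<in> T \<Longrightarrow> qconj x \<in> T"
  shows "subgroup (quat_mat a b ` T) SL2"
proof (rule SL2_subgroupI)
  show "quat_mat a b ` T \<subseteq> carrier SL2" using T(1) by (auto simp: quat_mat_in_SL2_iff[OF ab])
  show "(1,0,0,1) \<in> quat_mat a b ` T"
    using T(2) image_eqI[of "(1,0,0,1)" "quat_mat a b" "(1,0,0,0)" T] by (simp add: quat_mat_def)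
  show "mat2_mult x y \<in> quat_mat a b ` T" if "x \<in> quat_mat a b ` T" "y \<in> quat_mat a b ` T" for x y
    using that T(3) by (auto simp: quat_mat_qmul[OF ab])
  show "(m22,-m12,-m21,m11) \<in> quat_mat a b ` T"
    if "(m11,m12,m21,m22) \<in> quat_mat a b ` T" for m11 m12 m21 m22
  proof -
    from that obtain t where "t \<in> T" "(m11,m12,m21,m22) = quat_mat a b t" by blast
    then show ?thesis using T(4) quat_mat_qconj[OF sym] by (metis image_eqI)
  qed
qed

lemma not_class_Yn_PSL2_if_unit_quats:
  fixes a b :: "'a::field" and T :: "'a quat set"
  assumes two: "(2::'a) \<noteq> 0" and ab: "a*a + b*b = -1"
    and T: "\<And>x. x \<in> T \<Longrightarrow> qnorm x = 1" "(1,0,0,0) \<in> T" "(-1,0,0,0) \<in> T"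
      "\<And>x y. x \<in> T \<Longrightarrow> y \<in> T \<Longrightarrow> qmul x y \<in> T" "\<And>x. x \<in> T \<Longrightarrow> qconj x \<in> T"
    and uv: "u \<in> T" "v \<in> T" "qmul u v \<noteq> qmul v u" "qmul u v \<noteq> qscale (-1) (qmul v u)"
    and c: "qnorm c = 1" "c \<notin> T" "(\<lambda>x. qmul (qmul c x) (qconj c)) ` T = T"
  shows "\<not> class_Yn (PSL2::'a mat2 set monoid)"
proof -
  let ?M = "quat_mat a b"
  have inj: "inj ?M" using quat_mat_inj[OF ab two] by (rule injI)
  have X: "subgroup (?M ` T) SL2" by (rule quat_mat_image_subgroup[OF ab T(1,2,4,5)])
  obtain m11 m12 m21 m22 where m: "?M c = (m11,m12,m21,m22)" by (cases "?M c")
  have c_SL2: "?M c \<in> carrier SL2" using c(1) by (simp add: quat_mat_in_SL2_iff[OF ab])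
  then have "inv\<^bsub>SL2\<^esub> (?M c) = ?M (qconj c)"
    using SL2_inv[of m11 m22 m12 m21] quat_mat_qconj[OF m] by (simp add: m SL2_carrier)
  then have "(\<lambda>y. mat2_mult (mat2_mult (?M c) y) (inv\<^bsub>SL2\<^esub> (?M c))) ` ?M ` T
      = ?M ` (\<lambda>x. qmul (qmul c x) (qconj c)) ` T"
    by (simp add: image_comp comp_def quat_mat_qmul[OF ab])
  then have conj: "(\<lambda>y. mat2_mult (mat2_mult (?M c) y) (inv\<^bsub>SL2\<^esub> (?M c))) ` ?M ` T = ?M ` T"
    by (simp only: c(3))
  show ?thesis
  proof (rule not_class_Yn_PSL2[OF X _ _ _ _ _ c_SL2 _ conj])
    show "(-1,0,0,-1) \<in> ?M ` T"
      using T(3) image_eqI[of "(-1,0,0,-1)" ?M "(-1,0,0,0)" T] by (simp add: quat_mat_def)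
    show "?M u \<in> ?M ` T" "?M v \<in> ?M ` T" "?M c \<notin> ?M ` T"
      using uv(1,2) c(2) by (simp_all add: inj_image_mem_iff[OF inj])
    show "mat2_mult (?M u) (?M v) \<noteq> mat2_mult (?M v) (?M u)"
      "mat2_mult (?M u) (?M v) \<noteq> mat2_uminus (mat2_mult (?M v) (?M u))"
      using uv(3,4) by (simp_all add: quat_mat_qmul[OF ab] mat2_uminus_quat_mat inj_eq[OF inj])
  qed
qed

text \<open>Twice the 24 Hurwitz units \<open>\<plusminus>1, \<plusminus>i, \<plusminus>j, \<plusminus>k, (\<plusminus>1 \<plusminus> i \<plusminus> j \<plusminus> k)/2\<close>.\<close>
definition hurwitz_units_doubled :: "int quat list" where
  "hurwitz_units_doubled =
    [(2,0,0,0), (-2,0,0,0), (0,2,0,0), (0,-2,0,0), (0,0,2,0), (0,0,-2,0), (0,0,0,2), (0,0,0,-2),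
     (1,1,1,1), (1,1,1,-1), (1,1,-1,1), (1,1,-1,-1), (1,-1,1,1), (1,-1,1,-1), (1,-1,-1,1), (1,-1,-1,-1),
     (-1,1,1,1), (-1,1,1,-1), (-1,1,-1,1), (-1,1,-1,-1), (-1,-1,1,1), (-1,-1,1,-1), (-1,-1,-1,1),
     (-1,-1,-1,-1)]"

lemma hurwitz_units_doubled_mult:
  "\<forall>h\<in>set hurwitz_units_doubled. \<forall>h'\<in>set hurwitz_units_doubled.
     \<exists>k\<in>set hurwitz_units_doubled. qmul h h' = qscale 2 k"
  by code_simp

lemma hurwitz_units_doubled_qconj: "\<forall>h\<in>set hurwitz_units_doubled. qconj h \<in> set hurwitz_units_doubled"
  by code_simp

lemma hurwitz_units_doubled_qnorm: "\<forall>h\<in>set hurwitz_units_doubled. qnorm h = 4"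
  by code_simp

lemma hurwitz_units_doubled_real_part:
  "\<forall>(w,x,y,z)\<in>set hurwitz_units_doubled. w*w \<in> {0,1,4}"
  by code_simp

text \<open>Conjugation by \<open>1 + i\<close>, which is \<open>\<surd>2\<close> times a unit quaternion, permutes the Hurwitz units.\<close>
lemma hurwitz_units_doubled_conj:
  "\<forall>h\<in>set hurwitz_units_doubled. \<exists>k\<in>set hurwitz_units_doubled.
     qmul (qmul (1,1,0,0) h) (1,-1,0,0) = qscale 2 k"
  "\<forall>h\<in>set hurwitz_units_doubled. \<exists>k\<in>set hurwitz_units_doubled.
     qmul (qmul (1,1,0,0) k) (1,-1,0,0) = qscale 2 h"
  by code_simp+

definition hurwitz_quat :: "int quat \<Rightarrow> 'a::field quat" where
  "hurwitz_quat h = qscale (1/2) (of_int_quat h)"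

definition binary_tetrahedral :: "'a::field quat set" where
  "binary_tetrahedral = hurwitz_quat ` set hurwitz_units_doubled"

lemma qscale_quarter_of_int_quat_qscale_2:
  assumes "(2::'a::field) \<noteq> 0"
  shows "qscale (1/2 * (1/2)) (of_int_quat (qscale 2 k)) = (hurwitz_quat k :: 'a quat)"
proof -
  have "1/2 * (1/2) * 2 = (1/2::'a)" using four_neq_zero[OF assms] by simp
  then show ?thesis
    by (simp only: hurwitz_quat_def of_int_quat_qscale qscale_qscale of_int_numeral)
qed

lemma hurwitz_quat_qmul:
  assumes "(2::'a::field) \<noteq> 0" and "qmul h h' = qscale 2 k"
  shows "qmul (hurwitz_quat h) (hurwitz_quat h') = (hurwitz_quat k :: 'a quat)"
  using qscale_quarter_of_int_quat_qscale_2[OF assms(1), of k]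
  by (simp add: hurwitz_quat_def qmul_qscale flip: of_int_quat_qmul assms(2))

lemma binary_tetrahedral_qnorm:
  assumes "(2::'a::field) \<noteq> 0" and "x \<in> (binary_tetrahedral :: 'a quat set)"
  shows "qnorm x = 1"
proof -
  obtain h where "h \<in> set hurwitz_units_doubled" "x = hurwitz_quat h"
    using assms(2) unfolding binary_tetrahedral_def by blast
  then have "qnorm x = 1/2 * (1/2) * 4"
    using hurwitz_units_doubled_qnorm by (simp add: hurwitz_quat_def qnorm_qscale qnorm_of_int_quat)
  with four_neq_zero[OF assms(1)] show ?thesis by simp
qed

lemma binary_tetrahedral_sign:
  assumes "(2::'a::field) \<noteq> 0"
  shows "(1,0,0,0) \<in> (binary_tetrahedral :: 'a quat set)" "(-1,0,0,0) \<in> (binary_tetrahedral :: 'a quat set)"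
  unfolding binary_tetrahedral_def
  using image_eqI[of _ hurwitz_quat "(2,0,0,0)"] image_eqI[of _ hurwitz_quat "(-2,0,0,0)"] assms
  by (auto simp: hurwitz_quat_def qscale_def of_int_quat_def hurwitz_units_doubled_def)

lemma binary_tetrahedral_qmul:
  assumes "(2::'a::field) \<noteq> 0" and "x \<in> (binary_tetrahedral :: 'a quat set)" "y \<in> binary_tetrahedral"
  shows "qmul x y \<in> binary_tetrahedral"
  using assms(2,3) hurwitz_units_doubled_mult hurwitz_quat_qmul[OF assms(1)]
  unfolding binary_tetrahedral_def by blast

lemma binary_tetrahedral_qconj:
  "x \<in> (binary_tetrahedral :: 'a::field quat set) \<Longrightarrow> qconj x \<in> binary_tetrahedral"
  using hurwitz_units_doubled_qconj unfolding binary_tetrahedral_def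
  by (auto simp: hurwitz_quat_def qconj_qscale simp flip: of_int_quat_qconj)

lemma binary_tetrahedral_non_commuting:
  assumes two: "(2::'a::field) \<noteq> 0"
  shows "\<exists>u\<in>(binary_tetrahedral :: 'a quat set). \<exists>v\<in>binary_tetrahedral.
    qmul u v \<noteq> qmul v u \<and> qmul u v \<noteq> qscale (-1) (qmul v u)"
proof (intro bexI conjI)
  have "qmul (hurwitz_quat (0,2,0,0)) (hurwitz_quat (1,1,1,1)) = (hurwitz_quat (-1,1,-1,1) :: 'a quat)"
    "qmul (hurwitz_quat (1,1,1,1)) (hurwitz_quat (0,2,0,0)) = (hurwitz_quat (-1,1,1,-1) :: 'a quat)"
    by (rule hurwitz_quat_qmul[OF two], simp add: qmul_def qscale_def)+
  moreover have "(1/2::'a) \<noteq> 0" using two by simp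
  ultimately show "qmul (hurwitz_quat (0,2,0,0)) (hurwitz_quat (1,1,1,1))
      \<noteq> (qmul (hurwitz_quat (1,1,1,1)) (hurwitz_quat (0,2,0,0)) :: 'a quat)"
    "qmul (hurwitz_quat (0,2,0,0)) (hurwitz_quat (1,1,1,1))
      \<noteq> qscale (-1) (qmul (hurwitz_quat (1,1,1,1)) (hurwitz_quat (0,2,0,0)) :: 'a quat)"
    using two by (simp_all add: hurwitz_quat_def qscale_def of_int_quat_def self_eq_uminus_iff)
  show "hurwitz_quat (0,2,0,0) \<in> (binary_tetrahedral :: 'a quat set)"
    "hurwitz_quat (1,1,1,1) \<in> (binary_tetrahedral :: 'a quat set)"
    unfolding binary_tetrahedral_def by (auto simp: hurwitz_units_doubled_def)
qed

lemma sqrt_2_conj_hurwitz_quat: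
  fixes r :: "'a::field"
  assumes two: "(2::'a) \<noteq> 0" and r: "r*r = 2"
    and hk: "qmul (qmul (1,1,0,0) h) (1,-1,0,0) = qscale 2 k"
  shows "qmul (qmul (qscale (1/r) (of_int_quat (1,1,0,0))) (hurwitz_quat h))
      (qscale (1/r) (of_int_quat (1,-1,0,0))) = hurwitz_quat k"
proof -
  have "1/r * (1/2) * (1/r) = 1/(r*r*2)" by simp
  also have "\<dots> = 1/2 * (1/2)" by (simp add: r)
  finally have scale: "1/r * (1/2) * (1/r) = (1/2 * (1/2) :: 'a)" .
  have "qmul (qmul (qscale (1/r) (of_int_quat (1,1,0,0))) (hurwitz_quat h))
      (qscale (1/r) (of_int_quat (1,-1,0,0)))
      = qscale (1/r * (1/2) * (1/r)) (of_int_quat (qmul (qmul (1,1,0,0) h) (1,-1,0,0)))"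
    unfolding hurwitz_quat_def by (simp only: qmul_qscale of_int_quat_qmul)
  also have "\<dots> = hurwitz_quat k"
    unfolding scale hk by (rule qscale_quarter_of_int_quat_qscale_2[OF two])
  finally show ?thesis .
qed

text \<open>Hurwitz units have real part \<open>w/2\<close> with \<open>w\<^sup>2 \<in> {0,1,4}\<close>, whereas \<open>(2/r)\<^sup>2 = 2\<close>.\<close>
lemma sqrt_2_quat_notin_binary_tetrahedral:
  fixes r :: "'a::field"
  assumes two: "(2::'a) \<noteq> 0" and r: "r*r = 2"
  shows "qscale (1/r) (of_int_quat (1,1,0,0)) \<notin> (binary_tetrahedral :: 'a quat set)"
proof
  assume "qscale (1/r) (of_int_quat (1,1,0,0)) \<in> (binary_tetrahedral :: 'a quat set)"
  then obtain w x y z where h: "(w,x,y,z) \<in> set hurwitz_units_doubled"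
    "qscale (1/r) (of_int_quat (1,1,0,0)) = hurwitz_quat (w,x,y,z)"
    unfolding binary_tetrahedral_def by auto
  then have "of_int w = 2/r"
    using two by (simp add: hurwitz_quat_def qscale_def of_int_quat_def field_simps)
  then have "of_int (w*w) = (2::'a)" using r two by (simp add: field_simps)
  moreover have "w*w \<in> {0,1,4}" using hurwitz_units_doubled_real_part h(1) by blast
  ultimately have "(2::'a) = 0 \<or> (2::'a) = 1 \<or> (2::'a) = 4"
    by (auto simp del: of_int_mult)
  moreover have "(1::'a) + 1 \<noteq> 1" "(2::'a) + 2 \<noteq> 2"
    using two by (simp_all only: add_cancel_left_right one_neq_zero not_False_eq_True)
  moreover have "(1::'a) + 1 = 2" "(2::'a) + 2 = 4" by simp_all
  ultimately show False using two by metis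
qed

lemma binary_tetrahedral_normalizer:
  fixes r :: "'a::field"
  assumes two: "(2::'a) \<noteq> 0" and r: "r*r = 2"
  shows "\<exists>c::'a quat. qnorm c = 1 \<and> c \<notin> binary_tetrahedral
    \<and> (\<lambda>x. qmul (qmul c x) (qconj c)) ` binary_tetrahedral = binary_tetrahedral"
proof -
  let ?H = "set hurwitz_units_doubled" and ?T = "binary_tetrahedral :: 'a quat set"
  define c where "c = qscale (1/r) (of_int_quat (1,1,0,0))"
  have c_conj: "qconj c = qscale (1/r) (of_int_quat (1,-1,0,0))"
    by (simp add: c_def qconj_qscale flip: of_int_quat_qconj) (simp add: qconj_def)
  have conj: "qmul (qmul c (hurwitz_quat h)) (qconj c) = hurwitz_quat k"
    if "qmul (qmul (1,1,0,0) h) (1,-1,0,0) = qscale 2 k" for h k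
    unfolding c_conj unfolding c_def by (rule sqrt_2_conj_hurwitz_quat[OF two r that])
  have "1/r * (1/r) = (1/2::'a)" by (simp add: r)
  then have "qnorm c = 1"
    unfolding c_def qnorm_qscale qnorm_of_int_quat using two by (simp add: qnorm_def)
  moreover have "c \<notin> ?T"
    unfolding c_def by (rule sqrt_2_quat_notin_binary_tetrahedral[OF two r])
  moreover have "(\<lambda>x. qmul (qmul c x) (qconj c)) ` ?T = ?T"
  proof
    show "(\<lambda>x. qmul (qmul c x) (qconj c)) ` ?T \<subseteq> ?T"
    proof (rule image_subsetI)
      fix x assume "x \<in> ?T"
      then obtain h where h: "h \<in> ?H" "x = hurwitz_quat h" unfolding binary_tetrahedral_def by blast
      then obtain k where "k \<in> ?H" "qmul (qmul (1,1,0,0) h) (1,-1,0,0) = qscale 2 k"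
        using hurwitz_units_doubled_conj(1) by blast
      with h conj show "qmul (qmul c x) (qconj c) \<in> ?T" unfolding binary_tetrahedral_def by blast
    qed
    show "?T \<subseteq> (\<lambda>x. qmul (qmul c x) (qconj c)) ` ?T"
    proof
      fix x assume "x \<in> ?T"
      then obtain h where h: "h \<in> ?H" "x = hurwitz_quat h" unfolding binary_tetrahedral_def by blast
      then obtain k where k: "k \<in> ?H" "qmul (qmul (1,1,0,0) k) (1,-1,0,0) = qscale 2 h"
        using hurwitz_units_doubled_conj(2) by blast
      have "x = qmul (qmul c (hurwitz_quat k)) (qconj c)" using h(2) conj[OF k(2)] by simp
      moreover have "hurwitz_quat k \<in> ?T" using k(1) unfolding binary_tetrahedral_def by blast
      ultimately show "x \<in> (\<lambda>x. qmul (qmul c x) (qconj c)) ` ?T" by blast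
    qed
  qed
  ultimately show ?thesis by blast
qed

lemma not_class_Yn_PSL2_if_sqrt_2:
  fixes a b r :: "'a::field"
  assumes two: "(2::'a) \<noteq> 0" and ab: "a*a + b*b = -1" and r: "r*r = 2"
  shows "\<not> class_Yn (PSL2::'a mat2 set monoid)"
proof -
  obtain u v where uv: "u \<in> binary_tetrahedral" "v \<in> binary_tetrahedral"
    "qmul u v \<noteq> qmul v u" "qmul u v \<noteq> qscale (-1) (qmul v u :: 'a quat)"
    using binary_tetrahedral_non_commuting[OF two] by blast
  obtain c :: "'a quat" where c: "qnorm c = 1" "c \<notin> binary_tetrahedral"
    "(\<lambda>x. qmul (qmul c x) (qconj c)) ` binary_tetrahedral = binary_tetrahedral"
    using binary_tetrahedral_normalizer[OF two r] by blast
  show ?thesis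
    by (rule not_class_Yn_PSL2_if_unit_quats[OF two ab _ binary_tetrahedral_sign[OF two]
          binary_tetrahedral_qmul[OF two] binary_tetrahedral_qconj uv c])
      (rule binary_tetrahedral_qnorm[OF two])
qed

lemma two_is_square_if_card_7_or_9:
  assumes "card (UNIV::'a::{field,finite} set) \<in> {7, 9}"
  shows "\<exists>r::'a. r*r = 2"
  using assms
proof
  assume "card (UNIV::'a set) = 7"
  then have "(7::'a) = 0" using of_nat_card_UNIV_eq_0[where 'a='a] by simp
  moreover have "(3::'a)*3 = 2 + 7" by simp
  ultimately have "(3::'a)*3 = 2" by simp
  then show ?thesis by blast
next
  assume "card (UNIV::'a set) \<in> {9}"
  then have card: "card (UNIV::'a set) = 9" by simp
  then have "(9::'a) = 0" using of_nat_card_UNIV_eq_0[where 'a='a] by simp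
  moreover have "(3::'a)*3 = 9" by simp
  ultimately have "(3::'a) = 0" by (metis mult_eq_0_iff)
  moreover have "(2::'a) = 3 - 1" by simp
  ultimately have "(2::'a) = -1" by simp
  moreover obtain i :: 'a where "i*i = -1" using minus_one_square_if_card_9[OF card] by blast
  ultimately have "i*i = 2" by simp
  then show ?thesis by blast
qed

theorem lemma2p16:
  fixes q :: nat
  assumes "card (UNIV :: 'a set) = q"
    and "\<exists>p k. prime p \<and> k > 0 \<and> q = p ^ k"
    and "odd q" and "q \<noteq> 3" and "q \<noteq> 5"
  shows "\<not> class_Yn (PSL2 :: ('a::{field,finite} mat2 set) monoid)"
proof -
  obtain p k where "prime p" "k > 0" "q = p ^ k" using assms(2) by blast
  then have "q \<ge> 2" using prime_ge_2_nat[of p] self_le_power[of p k] by simp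
  then have "q = 7 \<or> q = 9 \<or> q \<ge> 10" using assms(3-5) by presburger
  then have q: "q \<in> {7, 9} \<or> q \<ge> 10" by blast
  have odd: "odd (card (UNIV::'a set))" using assms(1,3) by simp
  note two = two_neq_zero_if_odd_card[OF odd]
  obtain a b :: 'a where ab: "a*a + b*b = -1" using minus_one_sum_of_two_squares[OF odd] by blast
  from q show ?thesis
  proof
    assume "q \<in> {7, 9}"
    then obtain r :: 'a where "r*r = 2" using two_is_square_if_card_7_or_9 assms(1) by blast
    then show ?thesis by (rule not_class_Yn_PSL2_if_sqrt_2[OF two ab])
  next
    assume "q \<ge> 10"
    then obtain u v :: 'a where "is_rot_square u v" "u \<noteq> 0" "v \<noteq> 0"
      using exists_rot_square_nonzero[OF two] assms(1) by blast
    then show ?thesis by (rule not_class_Yn_PSL2_if_rot_square[OF two ab])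
  qed
qed

end
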